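(* Let $0<q<1$. For complex numbers $a,b,c,d$ with $\mathrm{Re}(a+b+c+d-1/2)>0$, and such that every $q^2$-gamma value occurring below is evaluated at a point that is not a non-positive integer, \[ \sum_{n=0}^{\infty}\frac{(1-q^{4n+2a})(1|q^{2})_{a+n-1}(1/2|q^{2})_{n-b}(1/2|q^{2})_{n-c}(1/2|q^{2})_{n-d}}{(1-q^{2})[n]_{q^{2}}!\,(1/2|q^{2})_{a+b+n}(1/2|q^{2})_{a+c+n}(1/2|q^{2})_{a+d+n}}\,q^{2(a+b+c+d)n-n} =\frac{\pi_{q}^{2}\,(1/2|q^{2})_{-b}(1/2|q^{2})_{-c}(1/2|q^{2})_{-d}(1/2|q^{2})_{a+b+c+d-1}}{(1|q^{2})_{a+b+c-1}(1|q^{2})_{a+b+d-1}(1|q^{2})_{a+c+d-1}\,q^{1/2}}. \]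
   Context: Let $0<q<1$ and write $q^{x}=e^{x\log q}$. $(z;q)_\infty=\prod_{k\ge0}(1-zq^k)$. $\Gamma_{q^2}(x)=\frac{(q^2;q^2)_\infty}{(q^{2x};q^2)_\infty}(1-q^2)^{1-x}$; for complex $x,\alpha$, $(x|q^2)_\alpha=\Gamma_{q^2}(x+\alpha)/\Gamma_{q^2}(x)$. $[z]_{q^2}=\frac{1-q^{2z}}{1-q^2}$, $[0]_{q^2}!=1$, $[n]_{q^2}!=\prod_{k=1}^n[k]_{q^2}$. $\pi_q=(1-q^2)q^{1/4}\frac{(q^2;q^2)_\infty^2}{(q;q^2)_\infty^2}$. *)

theory Defs
  imports "HOL-Analysis.Analysis"
begin

definition qpow :: "real \<Rightarrow> complex \<Rightarrow> complex" where
  "qpow q x = exp (x * complex_of_real (ln q))"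

definition qpoch_inf :: "complex \<Rightarrow> complex \<Rightarrow> complex" where
  "qpoch_inf z p = (\<Prod>k. 1 - z * p ^ k)"

definition qgamma2 :: "real \<Rightarrow> complex \<Rightarrow> complex" where
  "qgamma2 q x = qpoch_inf (complex_of_real (q\<^sup>2)) (complex_of_real (q\<^sup>2))
      / qpoch_inf (qpow q (2 * x)) (complex_of_real (q\<^sup>2))
      * exp ((1 - x) * complex_of_real (ln (1 - q\<^sup>2)))"

definition qgamma2_defined :: "real \<Rightarrow> complex \<Rightarrow> bool" where
  "qgamma2_defined q x \<longleftrightarrow> qpoch_inf (qpow q (2 * x)) (complex_of_real (q\<^sup>2)) \<noteq> 0"

definition qpochg2 :: "real \<Rightarrow> complex \<Rightarrow> complex \<Rightarrow> complex" where
  "qpochg2 q x \<alpha> = qgamma2 q (x + \<alpha>) / qgamma2 q x"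

definition qint2 :: "real \<Rightarrow> complex \<Rightarrow> complex" where
  "qint2 q z = (1 - qpow q (2 * z)) / complex_of_real (1 - q\<^sup>2)"

definition qfact2 :: "real \<Rightarrow> nat \<Rightarrow> complex" where
  "qfact2 q n = (\<Prod>k=1..n. qint2 q (of_nat k))"

definition pi_q :: "real \<Rightarrow> complex" where
  "pi_q q = complex_of_real (1 - q\<^sup>2) * qpow q (1/4)
      * (qpoch_inf (complex_of_real (q\<^sup>2)) (complex_of_real (q\<^sup>2)))\<^sup>2
      / (qpoch_inf (complex_of_real q) (complex_of_real (q\<^sup>2)))\<^sup>2"

end

theory Submission
  imports Defs
begin

text \<open>The series is Rogers' very-well-poised 6phi5 summation in base \<open>P = q^2\<close> with
  \<open>A = q^(2a)\<close>, \<open>B = q^(1-2b)\<close>, \<open>C = q^(1-2c)\<close>, \<open>D = q^(1-2d)\<close>, written with q^2-gamma ratios: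
  \<open>(x|q^2)_(\<alpha>+n) = (x|q^2)_\<alpha> (q^(2(x+\<alpha>)); q^2)_n / (1-q^2)^n\<close> turns the summand into a constant
  times the 6phi5 term, and once the infinite products are rewritten as q^2-gamma values the powers
  of \<open>1 - q^2\<close> cancel, \<open>pi_q\<close> entering as \<open>q^(1/4) Gamma_(q^2)(1/2)^2\<close>.

  For Rogers' sum \<open>F(w, y)\<close> (with \<open>C = 1/w\<close>, \<open>D = 1/y\<close>) the term-wise difference
  \<open>F(w, y) - R(w, y) F(w, P y)\<close> telescopes, giving a contiguity relation in \<open>y\<close>. Iterating it and
  letting \<open>P^N y \<longrightarrow> 0\<close> (Tannery's theorem) gives \<open>F(w, y) = Q(w, y) F(w, 0)\<close> with an explicit
  ratio \<open>Q\<close> of infinite products; the symmetry \<open>F(w, 0) = F(0, w)\<close> and the terminating value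
  \<open>F(0, 1) = 1\<close> then determine everything.\<close>

section \<open>Finite and infinite q-shifted factorials\<close>

definition qpoch_fin :: "complex \<Rightarrow> complex \<Rightarrow> nat \<Rightarrow> complex" where
  "qpoch_fin c P k = (\<Prod>j<k. 1 - c * P ^ j)"

text \<open>\<open>qpoch_hom y P k = y^k (1/y; P)_k\<close>, which stays meaningful at \<open>y = 0\<close>.\<close>
definition qpoch_hom :: "complex \<Rightarrow> complex \<Rightarrow> nat \<Rightarrow> complex" where
  "qpoch_hom y P k = (\<Prod>j<k. y - P ^ j)"

lemma qpoch_fin_0 [simp]: "qpoch_fin c P 0 = 1"
  by (simp add: qpoch_fin_def)

lemma qpoch_fin_Suc: "qpoch_fin c P (Suc k) = qpoch_fin c P k * (1 - c * P ^ k)"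
  by (simp add: qpoch_fin_def)

lemma qpoch_fin_Suc_shift: "qpoch_fin c P (Suc k) = (1 - c) * qpoch_fin (c * P) P k"
  unfolding qpoch_fin_def prod.lessThan_Suc_shift by (simp add: mult_ac)

lemma qpoch_fin_nonzero: "(\<And>j. c * P ^ j \<noteq> 1) \<Longrightarrow> qpoch_fin c P k \<noteq> 0"
  by (auto simp: qpoch_fin_def)

lemma qpoch_hom_0 [simp]: "qpoch_hom y P 0 = 1"
  by (simp add: qpoch_hom_def)

lemma qpoch_hom_Suc: "qpoch_hom y P (Suc k) = qpoch_hom y P k * (y - P ^ k)"
  by (simp add: qpoch_hom_def)

lemma qpoch_hom_Suc_mult_base: "qpoch_hom (P * y) P (Suc k) = (P * y - 1) * P ^ k * qpoch_hom y P k"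
proof -
  have "(\<Prod>i<k. P*y - P*P^i) = (\<Prod>i<k. P*(y - P^i))" by (simp add: right_diff_distrib)
  also have "\<dots> = P^k * qpoch_hom y P k" by (simp add: prod.distrib qpoch_hom_def)
  finally show ?thesis unfolding qpoch_hom_def prod.lessThan_Suc_shift by (simp add: mult_ac)
qed

lemma qpoch_hom_eq_qpoch_fin:
  assumes "c * y = 1" shows "qpoch_hom y P n = y ^ n * qpoch_fin c P n"
proof -
  have "y - P^j = y * (1 - c * P^j)" for j using assms by (simp add: algebra_simps)
  then show ?thesis unfolding qpoch_hom_def qpoch_fin_def by (simp add: prod.distrib)
qed

lemma convergent_prod_qpoch:
  fixes c P :: complex
  assumes "norm P < 1"
  shows "convergent_prod (\<lambda>k. 1 - c * P ^ k)"
proof -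
  have "summable (\<lambda>k. norm c * norm P ^ k)"
    using assms by (intro summable_mult summable_geometric) simp
  then have "summable (\<lambda>k. norm ((1 - c * P ^ k) - 1))"
    by (simp add: norm_mult norm_power)
  then show ?thesis
    by (intro abs_convergent_prod_imp_convergent_prod summable_imp_abs_convergent_prod)
qed

lemma qpoch_fin_tendsto:
  assumes "norm P < 1"
  shows "(\<lambda>n. qpoch_fin c P n) \<longlonglongrightarrow> qpoch_inf c P"
proof -
  have "(\<lambda>n. \<Prod>i\<le>n. 1 - c * P ^ i) \<longlonglongrightarrow> qpoch_inf c P"
    unfolding qpoch_inf_def by (rule convergent_prod_LIMSEQ[OF convergent_prod_qpoch[OF assms]])
  then have "(\<lambda>n. qpoch_fin c P (Suc n)) \<longlonglongrightarrow> qpoch_inf c P"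
    by (simp add: qpoch_fin_def lessThan_Suc_atMost)
  then show ?thesis by (rule LIMSEQ_imp_Suc)
qed

lemma qpoch_inf_split:
  assumes "norm P < 1"
  shows "qpoch_inf c P = qpoch_fin c P n * qpoch_inf (c * P ^ n) P"
proof -
  have "(\<lambda>k. 1 - c * P ^ k) has_prod ((\<Prod>k<n. 1 - c * P ^ k) * (\<Prod>k. 1 - c * P ^ (k + n)))"
    by (rule has_prod_ignore_initial_segment'[OF convergent_prod_qpoch[OF assms]])
  then have "qpoch_inf c P = (\<Prod>k<n. 1 - c * P ^ k) * (\<Prod>k. 1 - c * P ^ (k + n))"
    unfolding qpoch_inf_def by (rule has_prod_unique[symmetric])
  then show ?thesis by (simp add: qpoch_fin_def qpoch_inf_def power_add mult_ac)
qed

lemma qpoch_inf_nonzero_iff: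
  assumes "norm P < 1"
  shows "qpoch_inf c P \<noteq> 0 \<longleftrightarrow> (\<forall>j. c * P ^ j \<noteq> 1)"
proof -
  have "(\<lambda>k. 1 - c * P ^ k) has_prod qpoch_inf c P"
    unfolding qpoch_inf_def by (rule convergent_prod_has_prod[OF convergent_prod_qpoch[OF assms]])
  then show ?thesis using has_prod_eq_0_iff by (fastforce simp: image_iff)
qed

lemma qpoch_inf_zero [simp]: "qpoch_inf 0 P = 1"
  by (simp add: qpoch_inf_def)

lemma qpoch_inf_mult_power:
  assumes "norm P < 1" "qpoch_inf c P \<noteq> 0"
  shows "qpoch_inf (c * P ^ n) P = qpoch_inf c P / qpoch_fin c P n"
  using qpoch_inf_split[OF assms(1), of c n] assms(2) by (auto simp: field_simps)

section \<open>Rogers' very-well-poised 6phi5 summation\<close>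

text \<open>With \<open>C = 1/w\<close>, \<open>D = 1/y\<close>, \<open>vwp_term P A B w y k\<close> is the \<open>k\<close>-th term of the very-well-poised
  \<open>\<^sub>6\<phi>\<^sub>5(A; B, C, D; P, AP/(BCD))\<close>; writing it in \<open>w\<close> and \<open>y\<close> lets \<open>C\<close>, \<open>D\<close> go to infinity.\<close>
definition vwp_term :: "complex \<Rightarrow> complex \<Rightarrow> complex \<Rightarrow> complex \<Rightarrow> complex \<Rightarrow> nat \<Rightarrow> complex" where
  "vwp_term P A B w y k = (1 - A*P^(2*k))/(1-A) * qpoch_fin A P k * qpoch_fin B P k
     / (qpoch_fin P P k * qpoch_fin (A*P/B) P k)
     * (A*P/B)^k * qpoch_hom w P k / qpoch_fin (A*P*w) P k * qpoch_hom y P k / qpoch_fin (A*P*y) P k"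

definition vwp_factor :: "complex \<Rightarrow> complex \<Rightarrow> complex \<Rightarrow> complex \<Rightarrow> complex \<Rightarrow> complex" where
  "vwp_factor P A B w y = (1 - (A*P/B)*y)*(1 - A*P*w*y)/((1 - A*P*y)*(1 - (A*P/B)*w*y))"

text \<open>\<open>vwp_term w y - vwp_factor w y \<cdot> vwp_term w (P y)\<close> telescopes along this sequence.\<close>
fun vwp_antidiff :: "complex \<Rightarrow> complex \<Rightarrow> complex \<Rightarrow> complex \<Rightarrow> complex \<Rightarrow> nat \<Rightarrow> complex" where
  "vwp_antidiff P A B w y 0 = 0"
| "vwp_antidiff P A B w y (Suc m) =
     - ((A*P/B)^(Suc m) * qpoch_fin A P (Suc m) * qpoch_fin B P (Suc m) * qpoch_hom w P (Suc m)
         * y * qpoch_hom y P m)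
     / ((1-A) * (1 - (A*P/B)*w*y) * qpoch_fin P P m * qpoch_fin (A*P/B) P m
         * qpoch_fin (A*P*w) P m * qpoch_fin (A*P*y) P (Suc m))"

lemma vwp_term_swap: "vwp_term P A B w y k = vwp_term P A B y w k"
  by (simp add: vwp_term_def field_simps)

lemma vwp_telescope_identity:
  fixes A B P w y X :: complex
  defines "z \<equiv> A*P/B"
  assumes nz: "B \<noteq> 0"
    "1 - P*X \<noteq> 0" "1 - z*X \<noteq> 0" "1 - A*P*w*X \<noteq> 0"
    "1 - A*P*y*P*X \<noteq> 0" "1 - A*P*y \<noteq> 0" "1 - z*w*y \<noteq> 0"
  shows "(1-A*P^2*X^2)/((1-P*X)*(1-z*X)*(1-A*P*w*X)) * (y-X)
     - (1 - z*y)*(1 - A*P*w*y)/((1 - A*P*y)*(1 - z*w*y)) *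
       ((1-A*P^2*X^2)/((1-P*X)*(1-z*X)*(1-A*P*w*X)) * ((P*y-1)*X*(1-A*P*y)/(1-A*P*y*P*X)))
   = - (z*(1-A*P*X)*(1-B*P*X)*(w-P*X)*y*(y-X))/((1-z*w*y)*(1-P*X)*(1-z*X)*(1-A*P*w*X)*(1-A*P*y*P*X))
     + y/(1-z*w*y)"
proof -
  define D1 where "D1 = 1-P*X"
  define D2 where "D2 = B-A*P*X"
  define D3 where "D3 = 1-A*P*w*X"
  define D4 where "D4 = 1-A*P*P*y*X"
  define D5 where "D5 = 1-A*P*y"
  define D6 where "D6 = B-A*P*w*y"
  define N3 where "N3 = B-A*P*y"
  define E where "E = 1-A*P^2*X^2"
  have e1: "1 - z*X = D2/B" "1 - z*w*y = D6/B" "1 - z*y = N3/B"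
    using nz(1) unfolding z_def D2_def D6_def N3_def by (simp_all add: field_simps)
  have e2: "1-P*X = D1" "1-A*P*w*X = D3" "1-A*P*y*P*X = D4" "1 - A*P*y = D5" "1-A*P^2*X^2 = E"
    by (simp_all add: D1_def D3_def D4_def D5_def E_def mult_ac)
  have n: "D1 \<noteq> 0" "D2 \<noteq> 0" "D3 \<noteq> 0" "D4 \<noteq> 0" "D5 \<noteq> 0" "D6 \<noteq> 0"
    using nz e1 e2 by auto
  have poly: "E*(y-X)*D4*D6 - N3*(1-A*P*w*y)*E*(P*y-1)*X
    = -A*P*(1-A*P*X)*(1-B*P*X)*(w-P*X)*y*(y-X)+y*D1*D2*D3*D4"
    unfolding D1_def D2_def D3_def D4_def D6_def N3_def E_def
    by (simp add: algebra_simps power2_eq_square)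
  have L: "E/(D1*(D2/B)*D3) * (y-X) - (N3/B)*(1 - A*P*w*y)/(D5*(D6/B)) *
       (E/(D1*(D2/B)*D3) * ((P*y-1)*X*D5/D4))
     = (E*(y-X)*D4*D6 - N3*(1-A*P*w*y)*E*(P*y-1)*X) * B / (D1*D2*D3*D4*D6)"
    using n nz(1) by (simp add: field_simps)
  have R: "- ((A*P/B)*(1-A*P*X)*(1-B*P*X)*(w-P*X)*y*(y-X))/((D6/B)*D1*(D2/B)*D3*D4) + y/(D6/B)
     = (-A*P*(1-A*P*X)*(1-B*P*X)*(w-P*X)*y*(y-X)+y*D1*D2*D3*D4) * B / (D1*D2*D3*D4*D6)"
    using n nz(1) by (simp add: field_simps)
  show ?thesis
    unfolding e1 e2 using L R poly by (simp add: z_def)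
qed

lemma vwp_term_telescope_0:
  assumes B: "B \<noteq> 0" and A: "A \<noteq> 1" and hy: "A*P*y \<noteq> 1" and hwy: "(A*P/B)*w*y \<noteq> 1"
  shows "vwp_term P A B w y 0 - vwp_factor P A B w y * vwp_term P A B w (P*y) 0
       = vwp_antidiff P A B w y 1 - vwp_antidiff P A B w y 0"
proof -
  define D5 where "D5 = 1 - A*P*y"
  define D6 where "D6 = B - A*P*w*y"
  have n: "1 - A \<noteq> 0" "D5 \<noteq> 0" "D6 \<noteq> 0"
    using A hy hwy B by (auto simp: D5_def D6_def field_simps)
  have e: "1 - A*P/B*y = (B - A*P*y)/B" "1 - A*P/B*w*y = D6/B"
    using B by (simp_all add: D6_def field_simps)
  have r: "vwp_factor P A B w y = (B - A*P*y)*(1 - A*P*w*y)/(D5*D6)"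
    unfolding vwp_factor_def e D5_def[symmetric] using B by simp
  have g: "vwp_antidiff P A B w y 1 = -(A*P*(1-B)*(w-1)*y)/(D6*D5)"
    unfolding One_nat_def vwp_antidiff.simps e using B n
    by (simp add: qpoch_fin_Suc qpoch_hom_Suc D5_def)
  have "1 - vwp_factor P A B w y = vwp_antidiff P A B w y 1"
    unfolding r g using n by (simp add: field_simps) (simp add: D5_def D6_def algebra_simps)
  then show ?thesis using n by (simp add: vwp_term_def)
qed

lemma vwp_term_telescope_Suc:
  fixes P A B w y :: complex
  defines "z \<equiv> A*P/B"
  assumes B: "B \<noteq> 0" and A: "A \<noteq> 1"
    and hP: "\<And>j. P^(Suc j) \<noteq> 1" and hz: "\<And>j. z*P^j \<noteq> 1"
    and hw: "\<And>j. A*P*w*P^j \<noteq> 1" and hy: "\<And>j. A*P*y*P^j \<noteq> 1"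
    and hzwy: "z*w*y \<noteq> 1"
  shows "vwp_term P A B w y (Suc m) - vwp_factor P A B w y * vwp_term P A B w (P*y) (Suc m)
       = vwp_antidiff P A B w y (Suc (Suc m)) - vwp_antidiff P A B w y (Suc m)"
proof -
  define X where "X = P^m"
  define al where "al = qpoch_fin A P m"
  define be where "be = qpoch_fin B P m"
  define pp where "pp = qpoch_fin P P m"
  define ga where "ga = qpoch_fin z P m"
  define si where "si = qpoch_hom w P m"
  define omg where "omg = qpoch_fin (A*P*w) P m"
  define rh where "rh = qpoch_hom y P m"
  define ch where "ch = qpoch_fin (A*P*y) P m"
  have nzp: "pp \<noteq> 0" "ga \<noteq> 0" "omg \<noteq> 0" "ch \<noteq> 0"
    unfolding pp_def ga_def omg_def ch_def
    by (auto intro!: qpoch_fin_nonzero simp: hz hw hy) (metis hP power_Suc)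
  have nzs: "1 - P*X \<noteq> 0" "1 - z*X \<noteq> 0" "1 - A*P*w*X \<noteq> 0" "1 - A*P*y*X \<noteq> 0"
    "1 - A*P*y*P*X \<noteq> 0" "1 - A*P*y \<noteq> 0" "1 - z*w*y \<noteq> 0" "1 - A \<noteq> 0"
    unfolding X_def using hP[of m] hz[of m] hw[of m] hy[of m] hy[of "Suc m"] hy[of 0] hzwy A
    by (auto simp: mult_ac)
  txt \<open>All four quantities share the factor \<open>Z\<close>; what remains is the rational identity in
    \<open>X = P\<^sup>m\<close> of \<open>vwp_telescope_identity\<close>.\<close>
  define Z where "Z = z^m*z * al * be * si * rh * (1-A*X)*(1-B*X)*(w-X) / (pp * ga * omg * ch * (1-A) * (1-A*P*y*X))"
  have p2: "P^(2*Suc m) = P^2*X^2"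
  proof -
    have "P^(2*Suc m) = (P^(Suc m))^2" by (simp only: power_mult[symmetric] mult.commute)
    also have "\<dots> = P^2*X^2" by (simp add: X_def power_mult_distrib)
    finally show ?thesis .
  qed
  have u1e: "vwp_term P A B w y (Suc m) = (1 - A*P^2*X^2)/(1-A) * (al*(1-A*X)) * (be*(1-B*X)) / ((pp*(1-P*X)) * (ga*(1-z*X)))
      * (z^m*z) * (si*(w-X)) / (omg*(1-A*P*w*X)) * (rh*(y-X)) / (ch*(1-A*P*y*X))"
    unfolding vwp_term_def z_def[symmetric] p2
    by (simp add: qpoch_fin_Suc qpoch_hom_Suc al_def be_def pp_def ga_def si_def omg_def rh_def ch_def X_def mult_ac)
  have u1: "vwp_term P A B w y (Suc m) = Z * ((1-A*P^2*X^2)/((1-P*X)*(1-z*X)*(1-A*P*w*X)) * (y-X))"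
    unfolding u1e Z_def using nzp nzs by (simp add: field_simps)
  have pcs: "qpoch_fin (A*P*(P*y)) P (Suc m) = ch*(1-A*P*y*X)*(1-A*P*y*P*X)/(1-A*P*y)"
  proof -
    have E1: "qpoch_fin (A*P*y) P (Suc (Suc m)) = (1 - A*P*y) * qpoch_fin (A*P*y*P) P (Suc m)" by (rule qpoch_fin_Suc_shift)
    have E2: "qpoch_fin (A*P*y) P (Suc (Suc m)) = ch*(1-A*P*y*X)*(1-A*P*y*P*X)"
      by (simp add: qpoch_fin_Suc ch_def X_def mult_ac)
    have E3: "A*P*y*P = A*P*(P*y)" by (simp add: mult_ac)
    have "(1-A*P*y) * qpoch_fin (A*P*(P*y)) P (Suc m) = ch*(1-A*P*y*X)*(1-A*P*y*P*X)"
      using E1 E2 E3 by metis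
    then show ?thesis using nzs(6) by (simp add: eq_divide_eq mult.commute)
  qed
  have u2e: "vwp_term P A B w (P*y) (Suc m) = (1 - A*P^2*X^2)/(1-A) * (al*(1-A*X)) * (be*(1-B*X)) / ((pp*(1-P*X)) * (ga*(1-z*X)))
      * (z^m*z) * (si*(w-X)) / (omg*(1-A*P*w*X)) * ((P*y-1)*X*rh) / (ch*(1-A*P*y*X)*(1-A*P*y*P*X)/(1-A*P*y))"
    unfolding vwp_term_def z_def[symmetric] p2 pcs qpoch_hom_Suc_mult_base
    by (simp add: qpoch_fin_Suc qpoch_hom_Suc al_def be_def pp_def ga_def si_def omg_def rh_def ch_def X_def mult_ac)
  have u2: "vwp_term P A B w (P*y) (Suc m) = Z * ((1-A*P^2*X^2)/((1-P*X)*(1-z*X)*(1-A*P*w*X)) * ((P*y-1)*X*(1-A*P*y)/(1-A*P*y*P*X)))"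
    unfolding u2e Z_def using nzp nzs by (simp add: field_simps)
  have g2e: "vwp_antidiff P A B w y (Suc (Suc m)) = - ((z^m*z*z) * (al*(1-A*X)*(1-A*P*X)) * (be*(1-B*X)*(1-B*P*X)) * (si*(w-X)*(w-P*X)) * y * (rh*(y-X)))
        / ((1-A) * (1 - z*w*y) * (pp*(1-P*X)) * (ga*(1-z*X)) * (omg*(1-A*P*w*X)) * (ch*(1-A*P*y*X)*(1-A*P*y*P*X)))"
    unfolding vwp_antidiff.simps z_def[symmetric]
    by (simp add: qpoch_fin_Suc qpoch_hom_Suc al_def be_def pp_def ga_def si_def omg_def rh_def ch_def X_def mult_ac)
  have g2: "vwp_antidiff P A B w y (Suc (Suc m)) = Z * (- (z*(1-A*P*X)*(1-B*P*X)*(w-P*X)*y*(y-X))/((1-z*w*y)*(1-P*X)*(1-z*X)*(1-A*P*w*X)*(1-A*P*y*P*X)))"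
    unfolding g2e Z_def using nzp nzs by (simp add: field_simps)
  have g1e: "vwp_antidiff P A B w y (Suc m) = - ((z^m*z) * (al*(1-A*X)) * (be*(1-B*X)) * (si*(w-X)) * y * rh)
        / ((1-A) * (1 - z*w*y) * pp * ga * omg * (ch*(1-A*P*y*X)))"
    unfolding vwp_antidiff.simps z_def[symmetric]
    by (simp add: qpoch_fin_Suc qpoch_hom_Suc al_def be_def pp_def ga_def si_def omg_def rh_def ch_def X_def mult_ac)
  have g1: "vwp_antidiff P A B w y (Suc m) = Z * (- y/(1-z*w*y))"
    unfolding g1e Z_def using nzp nzs by (simp add: divide_simps)
  have rational: "(1-A*P^2*X^2)/((1-P*X)*(1-z*X)*(1-A*P*w*X)) * (y-X)
     - (1 - z*y)*(1 - A*P*w*y)/((1 - A*P*y)*(1 - z*w*y)) *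
       ((1-A*P^2*X^2)/((1-P*X)*(1-z*X)*(1-A*P*w*X)) * ((P*y-1)*X*(1-A*P*y)/(1-A*P*y*P*X)))
   = - (z*(1-A*P*X)*(1-B*P*X)*(w-P*X)*y*(y-X))/((1-z*w*y)*(1-P*X)*(1-z*X)*(1-A*P*w*X)*(1-A*P*y*P*X))
     + y/(1-z*w*y)"
    unfolding z_def by (rule vwp_telescope_identity) (use B nzs in \<open>simp_all add: z_def\<close>)
  have factor: "vwp_factor P A B w y = (1 - z*y)*(1 - A*P*w*y)/((1 - A*P*y)*(1 - z*w*y))"
    by (simp add: vwp_factor_def z_def)
  show ?thesis
  proof -
    let ?F = "(1-A*P^2*X^2)/((1-P*X)*(1-z*X)*(1-A*P*w*X))"
    have "Z * (?F * (y-X)) - vwp_factor P A B w y * (Z * (?F * ((P*y-1)*X*(1-A*P*y)/(1-A*P*y*P*X))))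
        = Z * (?F * (y-X) - vwp_factor P A B w y * (?F * ((P*y-1)*X*(1-A*P*y)/(1-A*P*y*P*X))))"
      by (simp add: algebra_simps)
    also have "\<dots> = Z * (- (z*(1-A*P*X)*(1-B*P*X)*(w-P*X)*y*(y-X))
        /((1-z*w*y)*(1-P*X)*(1-z*X)*(1-A*P*w*X)*(1-A*P*y*P*X))) - Z * (- y/(1-z*w*y))"
      unfolding factor rational by (simp add: algebra_simps)
    finally show ?thesis unfolding u1 u2 g1 g2 .
  qed
qed

lemma vwp_term_telescope:
  assumes "B \<noteq> 0" "A \<noteq> 1"
    and "\<And>j. P^(Suc j) \<noteq> 1" "\<And>j. (A*P/B)*P^j \<noteq> 1"
    and "\<And>j. A*P*w*P^j \<noteq> 1" "\<And>j. A*P*y*P^j \<noteq> 1"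
    and "(A*P/B)*w*y \<noteq> 1"
  shows "vwp_term P A B w y k - vwp_factor P A B w y * vwp_term P A B w (P*y) k
       = vwp_antidiff P A B w y (Suc k) - vwp_antidiff P A B w y k"
proof (cases k)
  case 0
  have "A*P*y \<noteq> 1" using assms(6)[of 0] by simp
  then show ?thesis using 0 vwp_term_telescope_0[OF assms(1,2) _ assms(7)] by (metis One_nat_def)
next
  case (Suc m)
  then show ?thesis using vwp_term_telescope_Suc assms by blast
qed

lemma prod_one_minus_ge:
  fixes a :: "nat \<Rightarrow> real"
  assumes "\<And>j. 0 \<le> a j" "\<And>j. a j \<le> 1"
  shows "(\<Prod>j<k. 1 - a j) \<ge> 1 - (\<Sum>j<k. a j)"
proof (induction k)
  case 0 then show ?case by simp
next
  case (Suc k)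
  have "(\<Prod>j<Suc k. 1 - a j) \<ge> (1 - (\<Sum>j<k. a j)) * (1 - a k)"
    using Suc assms[of k] by (simp, intro mult_right_mono) auto
  moreover have "(\<Sum>j<k. a j) * a k \<ge> 0" using assms by (simp add: sum_nonneg)
  ultimately show ?case by (simp add: algebra_simps)
qed

lemma norm_qpoch_hom_le: "norm (qpoch_hom y P k) \<le> (\<Prod>j<k. norm y + norm P ^ j)"
proof -
  have "norm (y - P ^ j) \<le> norm y + norm P ^ j" for j
    using norm_triangle_ineq4[of y "P ^ j"] by (simp add: norm_power)
  then show ?thesis unfolding qpoch_hom_def prod_norm[symmetric] by (intro prod_mono) auto
qed

lemma norm_qpoch_fin_ge:
  fixes c P :: complex
  assumes P: "norm P < 1" and c: "norm c \<le> (1 - norm P)/2"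
  shows "norm (qpoch_fin c P k) \<ge> 1/2"
proof -
  have small: "norm c * norm P ^ j \<le> 1" for j
  proof -
    have "norm c * norm P ^ j \<le> norm c" using P by (intro mult_right_le_one_le power_le_one) auto
    moreover have "norm c \<le> 1/2" using c norm_ge_zero[of P] by argo
    ultimately show ?thesis by argo
  qed
  have "(\<Sum>j<k. norm P ^ j) = (1 - norm P ^ k) / (1 - norm P)"
    using P by (simp add: sum_gp_strict)
  also have "\<dots> \<le> 1 / (1 - norm P)"
    using P by (intro divide_right_mono) auto
  finally have "(\<Sum>j<k. norm c * norm P ^ j) \<le> norm c * (1 / (1 - norm P))"
    unfolding sum_distrib_left[symmetric] by (rule mult_left_mono) simp
  also have "\<dots> \<le> (1 - norm P)/2 * (1 / (1 - norm P))"
    using c P by (intro mult_right_mono) auto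
  also have "\<dots> = 1/2" using P by simp
  finally have sum: "(\<Sum>j<k. norm c * norm P ^ j) \<le> 1/2" .
  have "1 - (\<Sum>j<k. norm c * norm P ^ j) \<le> (\<Prod>j<k. 1 - norm c * norm P ^ j)"
    using small by (intro prod_one_minus_ge) auto
  also have "\<dots> \<le> (\<Prod>j<k. norm (1 - c * P ^ j))"
    using small norm_triangle_ineq2[of 1 "c * P ^ _"]
    by (intro prod_mono) (auto simp: norm_mult norm_power)
  also have "\<dots> = norm (qpoch_fin c P k)"
    unfolding qpoch_fin_def by (simp add: prod_norm)
  finally show ?thesis using sum by linarith
qed

locale rogers_6phi5 =
  fixes P A B :: complex
  assumes norm_P: "norm P < 1" and B0: "B \<noteq> 0"
    and hA: "\<And>j. A * P ^ j \<noteq> 1"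
    and hz: "\<And>j. (A * P / B) * P ^ j \<noteq> 1"
begin

abbreviation "z \<equiv> A * P / B"

lemma power_P_tendsto_0: "(\<lambda>n. P ^ n) \<longlonglongrightarrow> 0"
  by (rule LIMSEQ_power_zero[OF norm_P])

lemma power_Suc_P_neq_1: "P ^ Suc j \<noteq> 1"
proof -
  have "norm P * norm P ^ j \<le> norm P"
    using norm_P by (intro mult_right_le_one_le power_le_one) auto
  then have "norm (P ^ Suc j) < 1"
    using norm_P by (simp add: norm_power del: power_Suc) simp
  then show ?thesis by auto
qed

lemma norm_power_P_mult_le: "norm (P ^ n * x) \<le> norm x"
  using norm_P by (auto simp: norm_mult norm_power intro!: mult_left_le_one_le power_le_one)

lemma A_neq_1: "A \<noteq> 1"
  using hA[of 0] by simp

lemma qpoch_fin_P_nonzero: "qpoch_fin P P k \<noteq> 0"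
  by (rule qpoch_fin_nonzero) (metis power_Suc_P_neq_1 power_Suc)

lemma qpoch_fin_z_nonzero: "qpoch_fin z P k \<noteq> 0"
  by (rule qpoch_fin_nonzero[OF hz])

definition vwp_wpart :: "complex \<Rightarrow> nat \<Rightarrow> complex" where
  "vwp_wpart w k = qpoch_fin A P k * qpoch_fin B P k / (qpoch_fin P P k * qpoch_fin z P k)
     * z^k * qpoch_hom w P k / qpoch_fin (A*P*w) P k"

definition vwp_wratio :: "complex \<Rightarrow> nat \<Rightarrow> complex" where
  "vwp_wratio w k = (1-A*P^k)*(1-B*P^k)/((1-P*P^k)*(1-z*P^k)) * z * ((w-P^k)/(1-A*P*w*P^k))"

definition vwp_ratio :: "complex \<Rightarrow> complex \<Rightarrow> nat \<Rightarrow> complex" where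
  "vwp_ratio w y k = (1 - A*P^2*(P^k)^2)/(1 - A*(P^k)^2) * vwp_wratio w k * ((y-P^k)/(1-A*P*y*P^k))"

definition vwp_antidiff_ratio :: "complex \<Rightarrow> complex \<Rightarrow> nat \<Rightarrow> complex" where
  "vwp_antidiff_ratio w y m = - z * (1-A*P^m) * (1-B*P^m) * (w-P^m) * y
     / ((1 - A*(P^m)^2) * (1 - z*w*y) * (1-A*P*y*P^m))"

lemma vwp_term_eq_wpart:
  "vwp_term P A B w y k = (1 - A*P^(2*k))/(1-A) * vwp_wpart w k * (qpoch_hom y P k / qpoch_fin (A*P*y) P k)"
  unfolding vwp_term_def vwp_wpart_def by (simp add: field_simps)

lemma vwp_wratio_tendsto: "vwp_wratio w \<longlonglongrightarrow> z * w"
proof -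
  have "vwp_wratio w \<longlonglongrightarrow> (1-A*0)*(1-B*0)/((1-P*0)*(1-z*0)) * z * ((w-0)/(1-A*P*w*0))"
    unfolding vwp_wratio_def by (intro tendsto_intros power_P_tendsto_0) auto
  then show ?thesis by simp
qed

lemma vwp_ratio_tendsto: "vwp_ratio w y \<longlonglongrightarrow> z * w * y"
proof -
  have "vwp_ratio w y \<longlonglongrightarrow> (1 - A*P^2*0^2)/(1 - A*0^2) * (z*w) * ((y-0)/(1-A*P*y*0))"
    unfolding vwp_ratio_def by (intro tendsto_intros power_P_tendsto_0 vwp_wratio_tendsto) auto
  then show ?thesis by simp
qed

lemma vwp_wpart_Suc:
  assumes hw: "\<And>j. A*P*w*P^j \<noteq> 1"
  shows "vwp_wpart w (Suc k) = vwp_wpart w k * vwp_wratio w k"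
proof -
  define X where "X = P^k"
  have "qpoch_fin (A*P*w) P k \<noteq> 0" by (rule qpoch_fin_nonzero[OF hw])
  moreover have "1 - P*X \<noteq> 0" "1 - z*X \<noteq> 0" "1 - A*P*w*X \<noteq> 0"
    using power_Suc_P_neq_1[of k] hz[of k] hw[of k] by (auto simp: X_def)
  ultimately show ?thesis
    using qpoch_fin_P_nonzero[of k] qpoch_fin_z_nonzero[of k]
    unfolding vwp_wpart_def vwp_wratio_def X_def[symmetric]
    by (simp add: qpoch_fin_Suc qpoch_hom_Suc X_def field_simps)
qed

lemma vwp_term_Suc:
  assumes hw: "\<And>j. A*P*w*P^j \<noteq> 1" and hy: "\<And>j. A*P*y*P^j \<noteq> 1"
  shows "vwp_term P A B w y (Suc k) = vwp_term P A B w y k * vwp_ratio w y k"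
proof -
  define X where "X = P^k"
  have p2: "P^(2*k) = X^2" by (simp only: X_def power_mult[symmetric] mult.commute)
  then have p2: "A*P^(2*Suc k) = A*P^2*X^2" "P^(2*k) = X^2" by (simp_all add: power2_eq_square)
  have rearrange: "N/a * (W*R) * (H*u / (F*d)) = e/a * W * (H/F) * (N/e * R * (u/d))"
    if "F \<noteq> 0" "e \<noteq> 0" "d \<noteq> 0" "a \<noteq> 0" for N a W R H u F d e :: complex
    using that by (simp add: field_simps)
  have "qpoch_fin (A*P*y) P k \<noteq> 0" by (rule qpoch_fin_nonzero[OF hy])
  moreover have "1 - A*X^2 \<noteq> 0" "1 - A*P*y*X \<noteq> 0" "1 - A \<noteq> 0"
    using hA[of "2*k"] hy[of k] A_neq_1 p2(2) by (auto simp: X_def)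
  ultimately show ?thesis
    unfolding vwp_term_eq_wpart vwp_wpart_Suc[OF hw] vwp_ratio_def p2 X_def[symmetric]
      qpoch_fin_Suc qpoch_hom_Suc X_def[symmetric]
    by (rule rearrange)
qed

lemma vwp_antidiff_Suc:
  assumes hw: "\<And>j. A*P*w*P^j \<noteq> 1" and hy: "\<And>j. A*P*y*P^j \<noteq> 1"
    and hzwy: "z*w*y \<noteq> 1"
  shows "vwp_antidiff P A B w y (Suc m) = vwp_term P A B w y m * vwp_antidiff_ratio w y m"
proof -
  define X where "X = P^m"
  define al where "al = qpoch_fin A P m"
  define be where "be = qpoch_fin B P m"
  define pp where "pp = qpoch_fin P P m"
  define ga where "ga = qpoch_fin z P m"
  define gsg where "gsg = qpoch_hom w P m"
  define omg where "omg = qpoch_fin (A*P*w) P m"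
  define rh where "rh = qpoch_hom y P m"
  define ch where "ch = qpoch_fin (A*P*y) P m"
  have p2: "P^(2*m) = X^2" by (simp only: X_def power_mult[symmetric] mult.commute)
  have "omg \<noteq> 0" "ch \<noteq> 0" "pp \<noteq> 0" "ga \<noteq> 0"
    unfolding omg_def ch_def pp_def ga_def
    by (rule qpoch_fin_nonzero[OF hw], rule qpoch_fin_nonzero[OF hy],
        rule qpoch_fin_P_nonzero, rule qpoch_fin_z_nonzero)
  moreover have "1 - A \<noteq> 0" "1 - A*X^2 \<noteq> 0" "1 - z*w*y \<noteq> 0" "1 - A*P*y*X \<noteq> 0"
    using A_neq_1 hA[of "2*m"] hzwy hy[of m] p2 by (auto simp: X_def)
  moreover have "vwp_antidiff P A B w y (Suc m) = - ((z^m*z) * (al*(1-A*X)) * (be*(1-B*X)) * (gsg*(w-X)) * y * rh)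
      / ((1-A) * (1 - z*w*y) * pp * ga * omg * (ch*(1-A*P*y*X)))"
    unfolding vwp_antidiff.simps
    by (simp add: qpoch_fin_Suc qpoch_hom_Suc al_def be_def pp_def ga_def gsg_def omg_def rh_def ch_def X_def mult_ac)
  moreover have "vwp_term P A B w y m = (1 - A*X^2)/(1-A) * al * be / (pp * ga) * z^m * gsg / omg * rh / ch"
    unfolding vwp_term_def p2 by (simp add: al_def be_def pp_def ga_def gsg_def omg_def rh_def ch_def)
  moreover have "vwp_antidiff_ratio w y m
      = - z * (1-A*X) * (1-B*X) * (w-X) * y / ((1 - A*X^2) * (1 - z*w*y) * (1-A*P*y*X))"
    unfolding vwp_antidiff_ratio_def X_def ..
  moreover have "- ((zk*z) * (al*a2) * (be*b2) * (gsg*wn) * y * rh) / (a0 * d6 * pp * ga * omg * (ch*d5))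
    = e/a0 * al * be / (pp * ga) * zk * gsg / omg * rh / ch * (- z * a2 * b2 * wn * y / (e * d6 * d5))"
    if "a0 \<noteq> 0" "pp \<noteq> 0" "ga \<noteq> 0" "omg \<noteq> 0" "ch \<noteq> 0" "e \<noteq> 0" "d5 \<noteq> 0" "d6 \<noteq> 0"
    for a0 e d5 d6 zk al be pp ga gsg omg rh ch a2 b2 wn :: complex
    using that by (simp add: field_simps)
  ultimately show ?thesis by simp
qed

lemma summable_vwp_term:
  assumes hw: "\<And>j. A*P*w*P^j \<noteq> 1" and hy: "\<And>j. A*P*y*P^j \<noteq> 1"
    and lt: "norm (z*w*y) < 1"
  shows "summable (vwp_term P A B w y)"
proof -
  define c where "c = (1 + norm (z*w*y))/2"
  have c1: "c < 1" using lt by (simp add: c_def)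
  have "(\<lambda>k. norm (vwp_ratio w y k)) \<longlonglongrightarrow> norm (z*w*y)"
    by (intro tendsto_norm vwp_ratio_tendsto)
  moreover have "norm (z*w*y) < c" using lt by (simp add: c_def)
  ultimately have "eventually (\<lambda>k. norm (vwp_ratio w y k) < c) sequentially"
    by (rule order_tendstoD)
  then obtain N where N: "\<And>k. k \<ge> N \<Longrightarrow> norm (vwp_ratio w y k) < c"
    by (auto simp: eventually_sequentially)
  show ?thesis
  proof (rule summable_ratio_test[OF c1])
    fix n assume "n \<ge> N"
    have "norm (vwp_term P A B w y (Suc n)) = norm (vwp_term P A B w y n) * norm (vwp_ratio w y n)"
      by (simp add: vwp_term_Suc[OF hw hy] norm_mult)
    also have "\<dots> \<le> norm (vwp_term P A B w y n) * c"
      using N[OF \<open>n \<ge> N\<close>] by (intro mult_left_mono) auto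
    finally show "norm (vwp_term P A B w y (Suc n)) \<le> c * norm (vwp_term P A B w y n)"
      by (simp add: mult.commute)
  qed
qed

lemma vwp_antidiff_tendsto:
  assumes hw: "\<And>j. A*P*w*P^j \<noteq> 1" and hy: "\<And>j. A*P*y*P^j \<noteq> 1"
    and lt: "norm (z*w*y) < 1"
  shows "vwp_antidiff P A B w y \<longlonglongrightarrow> 0"
proof -
  have hzwy: "z*w*y \<noteq> 1" using lt by auto
  have "vwp_term P A B w y \<longlonglongrightarrow> 0"
    by (rule summable_LIMSEQ_zero[OF summable_vwp_term[OF hw hy lt]])
  moreover have "vwp_antidiff_ratio w y \<longlonglongrightarrow> - z * (1-A*0) * (1-B*0) * (w-0) * y
      / ((1 - A*0^2) * (1 - z*w*y) * (1-A*P*y*0))"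
    unfolding vwp_antidiff_ratio_def using hzwy by (intro tendsto_intros power_P_tendsto_0) auto
  ultimately have "(\<lambda>m. vwp_term P A B w y m * vwp_antidiff_ratio w y m) \<longlonglongrightarrow> 0 * (- z * (1-A*0) * (1-B*0) * (w-0) * y
      / ((1 - A*0^2) * (1 - z*w*y) * (1-A*P*y*0)))"
    by (rule tendsto_mult)
  then have "(\<lambda>m. vwp_antidiff P A B w y (Suc m)) \<longlonglongrightarrow> 0"
    by (simp only: vwp_antidiff_Suc[OF hw hy hzwy] mult_zero_left)
  then show ?thesis by (rule LIMSEQ_imp_Suc)
qed

lemma vwp_sum_shift:
  assumes hw: "\<And>j. A*P*w*P^j \<noteq> 1" and hy: "\<And>j. A*P*y*P^j \<noteq> 1"
    and lt: "norm (z*w*y) < 1"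
  shows "suminf (vwp_term P A B w y) = vwp_factor P A B w y * suminf (vwp_term P A B w (P*y))"
proof -
  have hy': "A*P*(P*y)*P^j \<noteq> 1" for j using hy[of "Suc j"] by (simp add: mult_ac)
  have "norm (z*w*(P*y)) \<le> norm (z*w*y)"
    using norm_power_P_mult_le[of 1 "z*w*y"] by (simp add: mult_ac)
  then have lt': "norm (z*w*(P*y)) < 1" using lt by linarith
  have hzwy: "z*w*y \<noteq> 1" using lt by auto
  have "(\<lambda>k. vwp_term P A B w y k - vwp_factor P A B w y * vwp_term P A B w (P*y) k) sums
      (suminf (vwp_term P A B w y) - vwp_factor P A B w y * suminf (vwp_term P A B w (P*y)))"
    by (intro sums_diff sums_mult summable_sums summable_vwp_term hw hy hy' lt lt')
  moreover have "(\<lambda>k. vwp_term P A B w y k - vwp_factor P A B w y * vwp_term P A B w (P*y) k)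
      sums (0 - vwp_antidiff P A B w y 0)"
    unfolding vwp_term_telescope[OF B0 A_neq_1 power_Suc_P_neq_1 hz hw hy hzwy]
    by (rule telescope_sums[OF vwp_antidiff_tendsto[OF hw hy lt]])
  ultimately have "suminf (vwp_term P A B w y) - vwp_factor P A B w y * suminf (vwp_term P A B w (P*y))
      = 0 - vwp_antidiff P A B w y 0"
    by (rule sums_unique2)
  then show ?thesis by simp
qed

lemma vwp_sum_iterate:
  assumes hw: "\<And>j. A*P*w*P^j \<noteq> 1" and hx: "\<And>j. A*P*x*P^j \<noteq> 1"
    and lt: "norm (z*w*x) < 1"
  shows "suminf (vwp_term P A B w x)
       = (\<Prod>n<N. vwp_factor P A B w (P^n*x)) * suminf (vwp_term P A B w (P^N*x))"
proof (induction N)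
  case 0 then show ?case by simp
next
  case (Suc N)
  have hy: "A*P*(P^N*x)*P^j \<noteq> 1" for j
    using hx[of "N+j"] by (simp add: power_add mult_ac)
  have "norm (z*w*(P^N*x)) \<le> norm (z*w*x)"
    using norm_power_P_mult_le[of N "z*w*x"] by (simp add: mult_ac)
  then have lt': "norm (z*w*(P^N*x)) < 1" using lt by linarith
  have "suminf (vwp_term P A B w (P^N*x))
      = vwp_factor P A B w (P^N*x) * suminf (vwp_term P A B w (P^Suc N*x))"
    using vwp_sum_shift[OF hw hy lt'] by (simp add: mult.assoc)
  then show ?case using Suc by (simp add: mult_ac)
qed

lemma summable_vwp_majorant:
  assumes hw: "\<And>j. A*P*w*P^j \<noteq> 1" and lt: "norm (z*w*x) < 1"
  shows "summable (\<lambda>k. norm (vwp_wpart w k) * (\<Prod>j<k. norm x + norm P ^ j))"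
    (is "summable ?M")
proof -
  define c where "c = (1 + norm (z*w*x))/2"
  have c1: "c < 1" using lt by (simp add: c_def)
  have "(\<lambda>k. norm (vwp_wratio w k) * (norm x + norm P ^ k)) \<longlonglongrightarrow> norm (z*w) * (norm x + 0)"
    using norm_P by (intro tendsto_intros vwp_wratio_tendsto LIMSEQ_power_zero) auto
  moreover have "norm (z*w) * (norm x + 0) < c"
    using lt unfolding c_def by (simp only: norm_mult[symmetric] add_0_right) simp
  ultimately have "eventually (\<lambda>k. norm (vwp_wratio w k) * (norm x + norm P ^ k) < c) sequentially"
    by (rule order_tendstoD)
  then obtain N where N: "\<And>k. k \<ge> N \<Longrightarrow> norm (vwp_wratio w k) * (norm x + norm P ^ k) < c"
    by (auto simp: eventually_sequentially)
  show ?thesis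
  proof (rule summable_ratio_test[OF c1])
    fix n assume "n \<ge> N"
    have Mn: "?M m \<ge> 0" for m by (intro mult_nonneg_nonneg prod_nonneg) auto
    have "?M (Suc n) = ?M n * (norm (vwp_wratio w n) * (norm x + norm P ^ n))"
      unfolding vwp_wpart_Suc[OF hw] by (simp add: norm_mult mult_ac)
    also have "\<dots> \<le> ?M n * c" using N[OF \<open>n \<ge> N\<close>] Mn[of n] by (intro mult_left_mono) auto
    finally show "norm (?M (Suc n)) \<le> c * norm (?M n)" using Mn[of n] Mn[of "Suc n"]
      by (simp add: mult.commute)
  qed
qed

lemma norm_vwp_term_le:
  assumes small: "norm (A*P*y) \<le> (1 - norm P)/2" and y: "norm y \<le> norm x"
  shows "norm (vwp_term P A B w y k)
       \<le> 2 * (1 + norm A) / norm (1-A) * (norm (vwp_wpart w k) * (\<Prod>j<k. norm x + norm P ^ j))"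
proof -
  have "(\<Prod>j<k. norm y + norm P ^ j) \<le> (\<Prod>j<k. norm x + norm P ^ j)"
    using y by (intro prod_mono) auto
  then have "norm (qpoch_hom y P k) \<le> (\<Prod>j<k. norm x + norm P ^ j)"
    using norm_qpoch_hom_le[of y P k] by linarith
  moreover have "norm (qpoch_fin (A*P*y) P k) \<ge> 1/2"
    by (rule norm_qpoch_fin_ge[OF norm_P small])
  ultimately have yp: "norm (qpoch_hom y P k) / norm (qpoch_fin (A*P*y) P k)
      \<le> (\<Prod>j<k. norm x + norm P ^ j) / (1/2)"
    by (intro frac_le prod_nonneg) auto
  have "norm (1 - A*P^(2*k)) \<le> 1 + norm A * norm P ^ (2*k)"
    using norm_triangle_ineq4[of 1 "A*P^(2*k)"] by (simp add: norm_mult norm_power)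
  also have "\<dots> \<le> 1 + norm A"
    using norm_P by (auto intro!: mult_right_le_one_le power_le_one)
  finally have "norm (1 - A*P^(2*k)) / norm (1-A) \<le> (1 + norm A) / norm (1-A)"
    by (intro divide_right_mono) auto
  then have "norm (vwp_term P A B w y k)
      \<le> (1 + norm A) / norm (1-A) * norm (vwp_wpart w k) * ((\<Prod>j<k. norm x + norm P ^ j) / (1/2))"
    unfolding vwp_term_eq_wpart norm_mult norm_divide
    by (intro mult_mono yp mult_right_mono) auto
  then show ?thesis by (simp add: algebra_simps)
qed

lemma vwp_sum_tendsto_orbit:
  assumes hw: "\<And>j. A*P*w*P^j \<noteq> 1" and lt: "norm (z*w*x) < 1"
  shows "(\<lambda>N. suminf (vwp_term P A B w (P^N*x))) \<longlonglongrightarrow> suminf (vwp_term P A B w 0)"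
proof -
  define C where "C = 2 * (1 + norm A) / norm (1-A)"
  have "(\<lambda>N. norm (P^N * (A*P*x))) \<longlonglongrightarrow> 0"
    by (intro tendsto_norm_zero tendsto_mult_left_zero power_P_tendsto_0)
  moreover have "(0::real) < (1 - norm P)/2" using norm_P by simp
  ultimately have "eventually (\<lambda>N. norm (P^N * (A*P*x)) < (1 - norm P)/2) sequentially"
    by (rule order_tendstoD)
  then obtain N0 where N0: "\<And>N. N \<ge> N0 \<Longrightarrow> norm (P^N * (A*P*x)) \<le> (1 - norm P)/2"
    by (auto simp: eventually_sequentially dest!: less_imp_le)
  have bound: "norm (vwp_term P A B w (P^N*x) k)
      \<le> C * (norm (vwp_wpart w k) * (\<Prod>j<k. norm x + norm P ^ j))" if "N \<ge> N0" for k N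
    unfolding C_def using N0[OF that] norm_power_P_mult_le[of N x]
    by (intro norm_vwp_term_le) (simp_all add: mult_ac)
  have pointwise: "(\<lambda>N. vwp_term P A B w (P^N*x) k) \<longlonglongrightarrow> vwp_term P A B w 0 k" for k
  proof -
    have "(\<lambda>N. P^N*x) \<longlonglongrightarrow> 0" by (intro tendsto_mult_left_zero power_P_tendsto_0)
    then have "(\<lambda>N. qpoch_hom (P^N*x) P k / qpoch_fin (A*P*(P^N*x)) P k)
        \<longlonglongrightarrow> qpoch_hom 0 P k / qpoch_fin (A*P*0) P k"
      unfolding qpoch_hom_def qpoch_fin_def by (intro tendsto_intros) auto
    then show ?thesis unfolding vwp_term_eq_wpart by (rule tendsto_mult_left)
  qed
  have "eventually (\<lambda>(k,N). norm (vwp_term P A B w (P^N*x) k)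
      \<le> C * (norm (vwp_wpart w k) * (\<Prod>j<k. norm x + norm P ^ j))) (at_top \<times>\<^sub>F sequentially)"
    unfolding eventually_prod_filter
    by (rule exI[of _ "\<lambda>_. True"], rule exI[of _ "\<lambda>N. N \<ge> N0"])
      (auto intro: bound simp: eventually_sequentially)
  from tannerys_theorem[OF pointwise this summable_mult[OF summable_vwp_majorant[OF hw lt]]]
  show ?thesis by simp
qed

lemma prod_vwp_factor: "(\<Prod>n<N. vwp_factor P A B w (P^n*x)) =
    qpoch_fin (z*x) P N * qpoch_fin (A*P*w*x) P N / (qpoch_fin (A*P*x) P N * qpoch_fin (z*w*x) P N)"
  unfolding vwp_factor_def qpoch_fin_def by (simp add: prod_dividef prod.distrib mult_ac)

lemma vwp_sum_eq_ratio:
  assumes hw: "\<And>j. A*P*w*P^j \<noteq> 1" and hx: "\<And>j. A*P*x*P^j \<noteq> 1"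
    and lt: "norm (z*w*x) < 1"
  shows "suminf (vwp_term P A B w x)
       = qpoch_inf (z*x) P * qpoch_inf (A*P*w*x) P / (qpoch_inf (A*P*x) P * qpoch_inf (z*w*x) P)
         * suminf (vwp_term P A B w 0)"
proof -
  have "qpoch_inf (A*P*x) P \<noteq> 0" using hx by (simp add: qpoch_inf_nonzero_iff[OF norm_P])
  moreover have "qpoch_inf (z*w*x) P \<noteq> 0"
    using lt norm_power_P_mult_le[of _ "z*w*x"]
    by (subst qpoch_inf_nonzero_iff[OF norm_P]) (metis less_le_trans mult.commute norm_one order.irrefl)
  ultimately have "(\<lambda>N. \<Prod>n<N. vwp_factor P A B w (P^n*x))
      \<longlonglongrightarrow> qpoch_inf (z*x) P * qpoch_inf (A*P*w*x) P / (qpoch_inf (A*P*x) P * qpoch_inf (z*w*x) P)"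
    unfolding prod_vwp_factor by (intro tendsto_intros qpoch_fin_tendsto[OF norm_P]) simp
  from tendsto_mult[OF this vwp_sum_tendsto_orbit[OF hw lt]]
  show ?thesis
    by (simp only: vwp_sum_iterate[OF hw hx lt, symmetric] LIMSEQ_const_iff)
qed

lemma vwp_sum_0_1: "suminf (vwp_term P A B 0 1) = 1"
proof -
  have "qpoch_hom 1 P (Suc m) = 0" for m
    unfolding qpoch_hom_def by (rule prod_zero) (auto intro: bexI[of _ 0])
  then have "vwp_term P A B 0 1 = (\<lambda>k. if k = 0 then 1 else 0)"
    using A_neq_1 by (auto simp: vwp_term_def fun_eq_iff gr0_conv_Suc)
  then show ?thesis using sums_single[of 0 "\<lambda>_. 1::complex"] by (simp add: sums_iff)
qed

theorem rogers_6phi5_sums: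
  assumes hw: "\<And>j. A*P*w*P^j \<noteq> 1" and hy: "\<And>j. A*P*y*P^j \<noteq> 1"
    and lt: "norm (z*w*y) < 1"
  shows "vwp_term P A B w y sums
    (qpoch_inf (A*P) P * qpoch_inf (z*w) P * qpoch_inf (z*y) P * qpoch_inf (A*P*w*y) P /
     (qpoch_inf z P * qpoch_inf (A*P*w) P * qpoch_inf (A*P*y) P * qpoch_inf (z*w*y) P))"
proof -
  have h0: "A*P*0*P^j \<noteq> 1" for j by simp
  have h1: "A*P*1*P^j \<noteq> 1" for j using hA[of "Suc j"] by (simp add: mult_ac)
  have qz: "qpoch_inf z P \<noteq> 0" using hz by (simp add: qpoch_inf_nonzero_iff[OF norm_P])
  have qa: "qpoch_inf (A*P) P \<noteq> 0" using h1 by (simp add: qpoch_inf_nonzero_iff[OF norm_P])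
  have "suminf (vwp_term P A B w 0) = suminf (vwp_term P A B 0 w)"
    by (rule arg_cong[where f=suminf], rule ext, rule vwp_term_swap)
  also have "\<dots> = qpoch_inf (z*w) P / qpoch_inf (A*P*w) P * suminf (vwp_term P A B 0 0)"
    using vwp_sum_eq_ratio[OF h0 hw] by simp
  also have "suminf (vwp_term P A B 0 0) = qpoch_inf (A*P) P / qpoch_inf z P"
    using vwp_sum_eq_ratio[OF h0 h1] vwp_sum_0_1 qz qa by (simp add: field_simps)
  finally have "suminf (vwp_term P A B w 0)
      = qpoch_inf (z*w) P / qpoch_inf (A*P*w) P * (qpoch_inf (A*P) P / qpoch_inf z P)" .
  then have "suminf (vwp_term P A B w y) =
    qpoch_inf (A*P) P * qpoch_inf (z*w) P * qpoch_inf (z*y) P * qpoch_inf (A*P*w*y) P /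
     (qpoch_inf z P * qpoch_inf (A*P*w) P * qpoch_inf (A*P*y) P * qpoch_inf (z*w*y) P)"
    using vwp_sum_eq_ratio[OF hw hy lt] by (simp add: field_simps)
  with summable_vwp_term[OF hw hy lt] show ?thesis by (simp add: sums_iff)
qed

end

section \<open>The q^2-gamma form\<close>

lemma qpow_add: "qpow p (x + y) = qpow p x * qpow p y"
  by (simp add: qpow_def distrib_right exp_add)

lemma qpow_diff: "qpow p (x - y) = qpow p x / qpow p y"
  by (simp add: qpow_def left_diff_distrib exp_diff)

lemma qpow_nonzero: "qpow p x \<noteq> 0"
  by (simp add: qpow_def)

lemma qpow_zero [simp]: "qpow p 0 = 1"
  by (simp add: qpow_def)

lemma qpow_mult_of_nat: "qpow p (x * of_nat n) = qpow p x ^ n"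
  unfolding qpow_def by (metis exp_of_nat_mult mult.assoc mult.commute)

lemma qpow_one: "0 < p \<Longrightarrow> qpow p 1 = complex_of_real p"
  by (simp add: qpow_def exp_of_real)

lemma qpow_of_nat: "0 < p \<Longrightarrow> qpow p (of_nat n) = complex_of_real p ^ n"
  using qpow_mult_of_nat[of p 1 n] by (simp add: qpow_one)

lemma qpow_double: "0 < q \<Longrightarrow> qpow q (2 * x) = qpow (q\<^sup>2) x"
  by (simp add: qpow_def ln_mult power2_eq_square algebra_simps)

lemma qpow_two: "0 < q \<Longrightarrow> qpow q 2 = complex_of_real (q\<^sup>2)"
  using qpow_double[of q 1] qpow_one[of "q\<^sup>2"] by simp

lemma qgamma2_eq:
  "qgamma2 q x = qpoch_inf (complex_of_real (q\<^sup>2)) (complex_of_real (q\<^sup>2))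
     / qpoch_inf (qpow q (2 * x)) (complex_of_real (q\<^sup>2)) * qpow (1 - q\<^sup>2) (1 - x)"
  by (simp add: qgamma2_def qpow_def)

lemma qpoch_inf_qsquare_nonzero:
  assumes "0 < q" "q < 1"
  shows "qpoch_inf (complex_of_real (q\<^sup>2)) (complex_of_real (q\<^sup>2)) \<noteq> 0"
proof -
  have "norm (complex_of_real (q\<^sup>2)) < 1"
    using assms unfolding norm_of_real by (simp add: abs_square_less_1)
  moreover have "complex_of_real (q\<^sup>2) * complex_of_real (q\<^sup>2) ^ j \<noteq> 1" for j
  proof -
    have "q\<^sup>2 * (q\<^sup>2) ^ j \<le> q\<^sup>2"
      using assms by (intro mult_right_le_one_le power_le_one) auto
    moreover have "q\<^sup>2 < 1" using assms by (simp add: power_less_one_iff)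
    ultimately have "q\<^sup>2 * (q\<^sup>2) ^ j \<noteq> 1" by linarith
    then show ?thesis by (metis of_real_eq_1_iff of_real_mult of_real_power)
  qed
  ultimately show ?thesis by (simp add: qpoch_inf_nonzero_iff)
qed

lemma qgamma2_add_nat:
  assumes "0 < q" "q < 1" and "qgamma2_defined q x"
  shows "qgamma2 q (x + of_nat n)
       = qgamma2 q x * qpoch_fin (qpow q (2 * x)) (complex_of_real (q\<^sup>2)) n / complex_of_real (1 - q\<^sup>2) ^ n"
proof -
  let ?P = "complex_of_real (q\<^sup>2)"
  have P: "norm ?P < 1" using assms unfolding norm_of_real by (simp add: abs_square_less_1)
  have "qpoch_inf (qpow q (2 * (x + of_nat n))) ?P = qpoch_inf (qpow q (2 * x) * ?P ^ n) ?P"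
    using assms by (simp add: distrib_left qpow_add qpow_double qpow_of_nat of_real_power)
  also have "\<dots> = qpoch_inf (qpow q (2 * x)) ?P / qpoch_fin (qpow q (2 * x)) ?P n"
    using assms(3) unfolding qgamma2_defined_def by (rule qpoch_inf_mult_power[OF P])
  finally have Q: "qpoch_inf (qpow q (2 * (x + of_nat n))) ?P
      = qpoch_inf (qpow q (2 * x)) ?P / qpoch_fin (qpow q (2 * x)) ?P n" .
  have W: "qpow (1 - q\<^sup>2) (1 - (x + of_nat n)) = qpow (1 - q\<^sup>2) (1 - x) / complex_of_real (1 - q\<^sup>2) ^ n"
    using assms by (simp add: diff_add_eq_diff_diff_swap qpow_diff qpow_of_nat power_less_one_iff)
  show ?thesis unfolding qgamma2_eq Q W by (simp add: field_simps)
qed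

lemma norm_qpow_less_1:
  assumes "0 < p" "p < 1" "0 < Re x"
  shows "norm (qpow p x) < 1"
proof -
  have "Re x * ln p < 0" using assms by (simp add: mult_pos_neg)
  then show ?thesis by (simp add: qpow_def)
qed

lemma qgamma2_defined_iff:
  assumes "0 < q" "q < 1"
  shows "qgamma2_defined q x \<longleftrightarrow> (\<forall>j. qpow q (2 * x) * complex_of_real (q\<^sup>2) ^ j \<noteq> 1)"
  unfolding qgamma2_defined_def using assms
  by (intro qpoch_inf_nonzero_iff) (unfold norm_of_real, simp add: abs_square_less_1)

lemma qgamma2_nonzero:
  assumes "0 < q" "q < 1" "qgamma2_defined q x"
  shows "qgamma2 q x \<noteq> 0"
  using assms qpoch_inf_qsquare_nonzero[OF assms(1,2)]
  by (simp add: qgamma2_eq qgamma2_defined_def qpow_nonzero)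

lemma qpoch_inf_eq_qgamma2:
  assumes "0 < q" "q < 1" "qgamma2_defined q x"
  shows "qpoch_inf (qpow q (2 * x)) (complex_of_real (q\<^sup>2))
       = qpoch_inf (complex_of_real (q\<^sup>2)) (complex_of_real (q\<^sup>2)) * qpow (1 - q\<^sup>2) (1 - x) / qgamma2 q x"
  using assms qgamma2_nonzero[OF assms]
  by (simp add: qgamma2_eq qgamma2_defined_def field_simps)

lemma qgamma2_one:
  assumes "0 < q" "q < 1"
  shows "qgamma2 q 1 = 1"
  using qpoch_inf_qsquare_nonzero[OF assms] assms by (simp add: qgamma2_eq qpow_two)

lemma qpochg2_add_nat:
  assumes "0 < q" "q < 1" and "qgamma2_defined q (x + \<alpha>)"
  shows "qpochg2 q x (\<alpha> + of_nat n)
       = qpochg2 q x \<alpha> * qpoch_fin (qpow q (2 * (x + \<alpha>))) (complex_of_real (q\<^sup>2)) n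
         / complex_of_real (1 - q\<^sup>2) ^ n"
  using qgamma2_add_nat[OF assms, of n]
  by (simp add: qpochg2_def add.assoc divide_inverse mult_ac)

lemma qfact2_eq:
  assumes "0 < q" "q < 1"
  shows "qfact2 q n = qpoch_fin (complex_of_real (q\<^sup>2)) (complex_of_real (q\<^sup>2)) n / complex_of_real (1 - q\<^sup>2) ^ n"
proof (induction n)
  case 0 then show ?case by (simp add: qfact2_def)
next
  case (Suc n)
  have "qfact2 q (Suc n) = qfact2 q n * qint2 q (of_nat (Suc n))"
    unfolding qfact2_def by (simp add: prod.nat_ivl_Suc')
  also have "qint2 q (of_nat (Suc n))
      = (1 - complex_of_real (q\<^sup>2) * complex_of_real (q\<^sup>2) ^ n) / complex_of_real (1 - q\<^sup>2)"
    unfolding qint2_def qpow_double[OF assms(1)] qpow_of_nat[OF zero_less_power[OF assms(1)]]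
    by (simp add: of_real_power)
  finally have "qfact2 q (Suc n) = qfact2 q n
      * ((1 - complex_of_real (q\<^sup>2) * complex_of_real (q\<^sup>2) ^ n) / complex_of_real (1 - q\<^sup>2))" .
  moreover have "q\<^sup>2 < 1" using assms by (simp add: power_less_one_iff)
  then have "complex_of_real (1 - q\<^sup>2) \<noteq> 0" unfolding of_real_eq_0_iff by simp
  ultimately show ?case using Suc.IH by (simp add: qpoch_fin_Suc divide_simps mult.commute)
qed

lemma pi_q_eq_qgamma2_half:
  assumes "0 < q" "q < 1"
  shows "pi_q q = qpow q (1/4) * (qgamma2 q (1/2))\<^sup>2"
proof -
  have "0 < 1 - q\<^sup>2" using assms by (simp add: power_less_one_iff)
  then have "(qpow (1 - q\<^sup>2) (1/2))\<^sup>2 = complex_of_real (1 - q\<^sup>2)"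
    using qpow_add[of "1 - q\<^sup>2" "1/2" "1/2"] qpow_one[of "1 - q\<^sup>2"]
    by (simp add: power2_eq_square)
  then show ?thesis
    using assms by (simp add: pi_q_def qgamma2_eq qpow_one power_divide power_mult_distrib mult_ac)
qed

lemma qpow_parameter_identities:
  fixes q :: real and a b c d :: complex
  defines "P \<equiv> complex_of_real (q\<^sup>2)" and "A \<equiv> qpow q (2 * a)" and "B \<equiv> qpow q (2 * (1/2 - b))"
    and "w \<equiv> qpow q (2 * (c - 1/2))" and "y \<equiv> qpow q (2 * (d - 1/2))"
  assumes q: "0 < q"
  shows "A*P/B = qpow q (2 * (1/2 + a + b))" "A*P*w = qpow q (2 * (1/2 + a + c))"
    "A*P*y = qpow q (2 * (1/2 + a + d))" "A*P/B*w = qpow q (2 * (a + b + c))"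
    "A*P/B*y = qpow q (2 * (a + b + d))" "A*P*w*y = qpow q (2 * (a + c + d))"
    "A*P/B*w*y = qpow q (2 * (a + b + c + d - 1/2))"
    "qpow q (2 * (1/2 - c)) * w = 1" "qpow q (2 * (1/2 - d)) * y = 1"
  unfolding P_def A_def B_def w_def y_def qpow_two[OF q, symmetric]
  by (simp_all only: qpow_add[symmetric] qpow_diff[symmetric],
      ((rule arg_cong[where f = "qpow q"], simp add: algebra_simps) | simp add: algebra_simps)+)

lemma qgamma2_summand_eq_vwp_term:
  fixes q :: real and a b c d :: complex
  defines "P \<equiv> complex_of_real (q\<^sup>2)" and "A \<equiv> qpow q (2 * a)" and "B \<equiv> qpow q (2 * (1/2 - b))"
    and "w \<equiv> qpow q (2 * (c - 1/2))" and "y \<equiv> qpow q (2 * (d - 1/2))"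
    and "K \<equiv> (1 - qpow q (2 * a)) * qpochg2 q 1 (a - 1) * qpochg2 q (1/2) (- b) * qpochg2 q (1/2) (- c)
        * qpochg2 q (1/2) (- d) / (complex_of_real (1 - q\<^sup>2) * qpochg2 q (1/2) (a + b)
        * qpochg2 q (1/2) (a + c) * qpochg2 q (1/2) (a + d))"
  assumes q: "0 < q" "q < 1"
    and defined: "qgamma2_defined q 1" "qgamma2_defined q (1/2)" "qgamma2_defined q a"
      "qgamma2_defined q (1/2 - b)" "qgamma2_defined q (1/2 - c)" "qgamma2_defined q (1/2 - d)"
      "qgamma2_defined q (1/2 + a + b)" "qgamma2_defined q (1/2 + a + c)"
      "qgamma2_defined q (1/2 + a + d)"
  shows "(1 - qpow q (4 * of_nat n + 2 * a)) * qpochg2 q 1 (a + of_nat n - 1)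
        * qpochg2 q (1/2) (of_nat n - b) * qpochg2 q (1/2) (of_nat n - c)
        * qpochg2 q (1/2) (of_nat n - d)
      / (complex_of_real (1 - q\<^sup>2) * qfact2 q n
        * qpochg2 q (1/2) (a + b + of_nat n) * qpochg2 q (1/2) (a + c + of_nat n)
        * qpochg2 q (1/2) (a + d + of_nat n))
      * qpow q (2 * (a + b + c + d) * of_nat n - of_nat n)
    = K * vwp_term P A B w y n"
proof -
  define W where "W = complex_of_real (1 - q\<^sup>2)"
  define C where "C = qpow q (2 * (1/2 - c))"
  define D where "D = qpow q (2 * (1/2 - d))"
  have ids: "A*P/B = qpow q (2 * (1/2 + a + b))" "A*P*w = qpow q (2 * (1/2 + a + c))"
      "A*P*y = qpow q (2 * (1/2 + a + d))" "A*P/B*w*y = qpow q (2 * (a + b + c + d - 1/2))"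
      "C * w = 1" "D * y = 1"
    unfolding P_def A_def B_def C_def D_def w_def y_def by (fact qpow_parameter_identities[OF q(1)])+
  have shift: "qpochg2 q x (\<alpha> + of_nat n) = qpochg2 q x \<alpha> * qpoch_fin (qpow q (2 * v)) P n / W ^ n"
    if "qgamma2_defined q v" "x + \<alpha> = v" for x \<alpha> v
    using qpochg2_add_nat[OF q, of x \<alpha> n] that by (simp add: P_def W_def)
  have e1: "qpochg2 q 1 (a + of_nat n - 1) = qpochg2 q 1 (a - 1) * qpoch_fin A P n / W ^ n"
    using shift[OF defined(3), of 1 "a - 1"] by (simp add: A_def algebra_simps)
  have e2: "qpochg2 q (1/2) (of_nat n - x) = qpochg2 q (1/2) (- x) * qpoch_fin (qpow q (2 * (1/2 - x))) P n / W ^ n"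
    if "qgamma2_defined q (1/2 - x)" for x
    using shift[OF that, of "1/2" "- x"] by (simp add: algebra_simps)
  have e3: "qpochg2 q (1/2) (x + of_nat n) = qpochg2 q (1/2) x * qpoch_fin (qpow q (2 * (1/2 + x))) P n / W ^ n"
    if "qgamma2_defined q (1/2 + x)" for x
    using shift[OF that, of "1/2" x] by simp
  have e4: "qpow q (4 * of_nat n + 2 * a) = A * P ^ (2 * n)"
    using qpow_add[of q "of_nat (2 * n) * 2" "2 * a"] qpow_mult_of_nat[of q 2 "2 * n"] qpow_two[OF q(1)]
    by (simp add: A_def P_def mult_ac)
  have e5: "qpow q (2 * (a + b + c + d) * of_nat n - of_nat n) = (A*P/B) ^ n * w ^ n * y ^ n"
    using qpow_mult_of_nat[of q "2 * (a + b + c + d - 1/2)" n] ids(4)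
    by (simp add: algebra_simps flip: power_mult_distrib)
  have nz: "qpoch_fin (qpow q (2 * x)) P n \<noteq> 0" if "qgamma2_defined q x" for x
    using that qgamma2_defined_iff[OF q] by (auto intro!: qpoch_fin_nonzero simp: P_def)
  have "q\<^sup>2 < 1" using q by (simp add: power_less_one_iff)
  then have W0: "W \<noteq> 0" unfolding W_def of_real_eq_0_iff by simp
  have shifted: "qpochg2 q (1/2) (a + b + of_nat n) = qpochg2 q (1/2) (a + b) * qpoch_fin (A*P/B) P n / W ^ n"
      "qpochg2 q (1/2) (a + c + of_nat n) = qpochg2 q (1/2) (a + c) * qpoch_fin (A*P*w) P n / W ^ n"
      "qpochg2 q (1/2) (a + d + of_nat n) = qpochg2 q (1/2) (a + d) * qpoch_fin (A*P*y) P n / W ^ n"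
    using e3[of "a + b"] e3[of "a + c"] e3[of "a + d"] defined(7-9) ids(1-3) by (simp_all add: add.assoc)
  have rearrange: "N * (G1*Fa/Wn) * (Gb*Fb/Wn) * (Gc*Fc/Wn) * (Gd*Fd/Wn)
        / (W * (Fp/Wn) * (Gab*Fz/Wn) * (Gac*Fs/Wn) * (Gad*Ft/Wn)) * (Z*S*T)
      = e*G1*Gb*Gc*Gd / (W*Gab*Gac*Gad) * (N/e * Fa * Fb / (Fp*Fz) * Z * (S*Fc) / Fs * (T*Fd) / Ft)"
    if "Fp \<noteq> 0" "Fz \<noteq> 0" "Fs \<noteq> 0" "Ft \<noteq> 0" "e \<noteq> 0" "Wn \<noteq> 0" "W \<noteq> 0"
      "Gab \<noteq> 0" "Gac \<noteq> 0" "Gad \<noteq> 0"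
    for N G1 Gb Gc Gd Gab Gac Gad Fa Fb Fc Fd Fp Fz Fs Ft W Wn Z S T e :: complex
    using that by (simp add: field_simps)
  have "qpoch_fin P P n \<noteq> 0" "qpoch_fin (A*P/B) P n \<noteq> 0" "qpoch_fin (A*P*w) P n \<noteq> 0"
      "qpoch_fin (A*P*y) P n \<noteq> 0"
    using nz[OF defined(1)] nz[OF defined(7)] nz[OF defined(8)] nz[OF defined(9)] ids(1-3) qpow_two[OF q(1)]
    by (simp_all add: P_def)
  moreover have "1 - A \<noteq> 0"
    using defined(3) qgamma2_defined_iff[OF q, of a] by (auto simp: A_def dest: spec[of _ 0])
  moreover have "W ^ n \<noteq> 0" "W \<noteq> 0" using W0 by simp_all
  moreover have "qpochg2 q (1/2) (a + b) \<noteq> 0" "qpochg2 q (1/2) (a + c) \<noteq> 0" "qpochg2 q (1/2) (a + d) \<noteq> 0"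
    using defined qgamma2_nonzero[OF q] by (simp_all add: qpochg2_def add.assoc)
  ultimately show ?thesis
    unfolding e1 e2[OF defined(4)] e2[OF defined(5)] e2[OF defined(6)] e4 e5
      qfact2_eq[OF q, folded P_def W_def] W_def[symmetric] K_def A_def[symmetric] B_def[symmetric]
      C_def[symmetric] D_def[symmetric] vwp_term_def qpoch_hom_eq_qpoch_fin[OF ids(5)]
      qpoch_hom_eq_qpoch_fin[OF ids(6)] shifted
    by (rule rearrange)
qed

lemma rogers_product_eq_qgamma2:
  fixes q :: real and a b c d :: complex
  defines "P \<equiv> complex_of_real (q\<^sup>2)" and "A \<equiv> qpow q (2 * a)" and "B \<equiv> qpow q (2 * (1/2 - b))"
    and "w \<equiv> qpow q (2 * (c - 1/2))" and "y \<equiv> qpow q (2 * (d - 1/2))"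
    and "K \<equiv> (1 - qpow q (2 * a)) * qpochg2 q 1 (a - 1) * qpochg2 q (1/2) (- b) * qpochg2 q (1/2) (- c)
        * qpochg2 q (1/2) (- d) / (complex_of_real (1 - q\<^sup>2) * qpochg2 q (1/2) (a + b)
        * qpochg2 q (1/2) (a + c) * qpochg2 q (1/2) (a + d))"
  assumes q: "0 < q" "q < 1"
    and defined: "qgamma2_defined q 1" "qgamma2_defined q (1/2)" "qgamma2_defined q a"
      "qgamma2_defined q (1/2 - b)" "qgamma2_defined q (1/2 - c)" "qgamma2_defined q (1/2 - d)"
      "qgamma2_defined q (1/2 + a + b)" "qgamma2_defined q (1/2 + a + c)"
      "qgamma2_defined q (1/2 + a + d)" "qgamma2_defined q (a + b + c + d - 1/2)"
      "qgamma2_defined q (a + b + c)" "qgamma2_defined q (a + b + d)" "qgamma2_defined q (a + c + d)"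
  shows "K * (qpoch_inf (A*P) P * qpoch_inf (A*P/B*w) P * qpoch_inf (A*P/B*y) P * qpoch_inf (A*P*w*y) P
      / (qpoch_inf (A*P/B) P * qpoch_inf (A*P*w) P * qpoch_inf (A*P*y) P * qpoch_inf (A*P/B*w*y) P))
    = (pi_q q)\<^sup>2 * qpochg2 q (1/2) (- b) * qpochg2 q (1/2) (- c) * qpochg2 q (1/2) (- d)
      * qpochg2 q (1/2) (a + b + c + d - 1)
      / (qpochg2 q 1 (a + b + c - 1) * qpochg2 q 1 (a + b + d - 1) * qpochg2 q 1 (a + c + d - 1)
      * qpow q (1/2))"
proof -
  define G where "G = qgamma2 q"
  define E where "E x = qpow (1 - q\<^sup>2) (1 - x)" for x
  define W where "W = complex_of_real (1 - q\<^sup>2)"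
  define K0 where "K0 = qpoch_inf P P"
  define Q where "Q = qpow q (1/4)"
  have ids: "A*P/B = qpow q (2 * (1/2 + a + b))" "A*P*w = qpow q (2 * (1/2 + a + c))"
      "A*P*y = qpow q (2 * (1/2 + a + d))" "A*P/B*w = qpow q (2 * (a + b + c))"
      "A*P/B*y = qpow q (2 * (a + b + d))" "A*P*w*y = qpow q (2 * (a + c + d))"
      "A*P/B*w*y = qpow q (2 * (a + b + c + d - 1/2))"
    unfolding P_def A_def B_def w_def y_def by (fact qpow_parameter_identities[OF q(1)])+
  have inf: "qpoch_inf (qpow q (2 * x)) P = K0 * E x / G x" if "qgamma2_defined q x" for x
    unfolding K0_def E_def G_def P_def by (rule qpoch_inf_eq_qgamma2[OF q that])
  have Gnz: "G x \<noteq> 0" if "qgamma2_defined q x" for x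
    unfolding G_def by (rule qgamma2_nonzero[OF q that])
  have "norm P < 1" using q unfolding P_def norm_of_real by (simp add: abs_square_less_1)
  from qpoch_inf_split[OF this, of A 1] have "qpoch_inf A P = (1 - A) * qpoch_inf (A*P) P"
    by (simp add: qpoch_fin_def)
  moreover have "1 - A \<noteq> 0"
    using defined(3) qgamma2_defined_iff[OF q, of a] by (auto simp: A_def dest: spec[of _ 0])
  ultimately have "qpoch_inf (A*P) P = qpoch_inf A P / (1 - A)"
    by (simp add: field_simps)
  with inf[OF defined(3)] have infA: "qpoch_inf (A*P) P = K0 * E a / G a / (1 - A)"
    by (simp add: A_def)
  have "0 < 1 - q\<^sup>2" using q by (simp add: power_less_one_iff)
  have "E a = qpow (1 - q\<^sup>2) (1 + (1 - (1/2 + a + b)) + (1 - (1/2 + a + c)) + (1 - (1/2 + a + d))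
      + (1 - (a + b + c + d - 1/2)) - (1 - (a + b + c)) - (1 - (a + b + d)) - (1 - (a + c + d)))"
    unfolding E_def by (rule arg_cong[where f = "qpow (1 - q\<^sup>2)"]) (simp add: algebra_simps)
  also have "\<dots> = W * E (1/2 + a + b) * E (1/2 + a + c) * E (1/2 + a + d) * E (a + b + c + d - 1/2)
      / (E (a + b + c) * E (a + b + d) * E (a + c + d))"
    unfolding E_def W_def by (simp only: qpow_add qpow_diff qpow_one[OF \<open>0 < 1 - q\<^sup>2\<close>]) simp
  finally have Ea: "E a = \<dots>" .
  have inf1: "qpoch_inf (A*P/B) P = K0 * E (1/2 + a + b) / G (1/2 + a + b)"
    unfolding ids(1) by (rule inf[OF defined(7)])
  have inf2: "qpoch_inf (A*P*w) P = K0 * E (1/2 + a + c) / G (1/2 + a + c)"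
    unfolding ids(2) by (rule inf[OF defined(8)])
  have inf3: "qpoch_inf (A*P*y) P = K0 * E (1/2 + a + d) / G (1/2 + a + d)"
    unfolding ids(3) by (rule inf[OF defined(9)])
  have inf4: "qpoch_inf (A*P/B*w) P = K0 * E (a + b + c) / G (a + b + c)"
    unfolding ids(4) by (rule inf[OF defined(11)])
  have inf5: "qpoch_inf (A*P/B*y) P = K0 * E (a + b + d) / G (a + b + d)"
    unfolding ids(5) by (rule inf[OF defined(12)])
  have inf6: "qpoch_inf (A*P*w*y) P = K0 * E (a + c + d) / G (a + c + d)"
    unfolding ids(6) by (rule inf[OF defined(13)])
  have inf7: "qpoch_inf (A*P/B*w*y) P = K0 * E (a + b + c + d - 1/2) / G (a + b + c + d - 1/2)"
    unfolding ids(7) by (rule inf[OF defined(10)])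
  have "qpochg2 q x \<alpha> = G v / G x" if "x + \<alpha> = v" for x \<alpha> v
    using that by (simp add: qpochg2_def G_def)
  then have g: "qpochg2 q 1 (x - 1) = G x / G 1" "qpochg2 q (1/2) (- x) = G (1/2 - x) / G (1/2)"
      "qpochg2 q (1/2) (a + x) = G (1/2 + a + x) / G (1/2)"
      "qpochg2 q (1/2) (a + b + c + d - 1) = G (a + b + c + d - 1/2) / G (1/2)" for x
    by (simp_all add: algebra_simps)
  have pi: "pi_q q = Q * (G (1/2))\<^sup>2" unfolding Q_def G_def by (rule pi_q_eq_qgamma2_half[OF q])
  have sqrt_q: "qpow q (1/2) = Q * Q" unfolding Q_def using qpow_add[of q "1/4" "1/4"] by simp
  have rearrange: "e * (Ga/G1) * (Gb/Gh) * (Gc/Gh) * (Gd/Gh) / (W * (Gab/Gh) * (Gac/Gh) * (Gad/Gh))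
      * (K0*Ea/Ga/e * (K0*Eabc/Gabc) * (K0*Eabd/Gabd) * (K0*Eacd/Gacd)
         / (K0*Eab/Gab * (K0*Eac/Gac) * (K0*Ead/Gad) * (K0*Et/Gt)))
    = (Q*Gh\<^sup>2)\<^sup>2 * (Gb/Gh) * (Gc/Gh) * (Gd/Gh) * (Gt/Gh) / (Gabc/G1 * (Gabd/G1) * (Gacd/G1) * (Q*Q))"
    if "G1 = 1" "Ea = W*Eab*Eac*Ead*Et/(Eabc*Eabd*Eacd)"
      "e \<noteq> 0" "Ga \<noteq> 0" "Gh \<noteq> 0" "Gab \<noteq> 0" "Gac \<noteq> 0" "Gad \<noteq> 0" "Gabc \<noteq> 0" "Gabd \<noteq> 0"
      "Gacd \<noteq> 0" "Gt \<noteq> 0" "K0 \<noteq> 0" "Eab \<noteq> 0" "Eac \<noteq> 0" "Ead \<noteq> 0" "Et \<noteq> 0" "Eabc \<noteq> 0"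
      "Eabd \<noteq> 0" "Eacd \<noteq> 0" "W \<noteq> 0" "Q \<noteq> 0"
    for e Ga G1 Gb Gc Gd Gh Gab Gac Gad Gabc Gabd Gacd Gt K0 Ea Eab Eac Ead Et Eabc Eabd Eacd W Q :: complex
    using that by (simp add: field_simps power2_eq_square)
  have G1: "G 1 = 1" unfolding G_def by (rule qgamma2_one[OF q])
  have "W \<noteq> 0"
    unfolding W_def of_real_eq_0_iff using \<open>0 < 1 - q\<^sup>2\<close> by simp
  then have nonzero: "K0 \<noteq> 0" "E x \<noteq> 0" "Q \<noteq> 0" "W \<noteq> 0" for x
    using qpoch_inf_qsquare_nonzero[OF q] by (simp_all add: K0_def P_def E_def Q_def qpow_nonzero)
  show ?thesis
    unfolding K_def A_def[symmetric] W_def[symmetric] infA inf1 inf2 inf3 inf4 inf5 inf6 inf7 g pi sqrt_q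
    by (rule rearrange[OF G1 Ea]) (use \<open>1 - A \<noteq> 0\<close> Gnz defined nonzero in simp_all)
qed

lemma vwp_term_qpow_sums:
  fixes q :: real and a b c d :: complex
  defines "P \<equiv> complex_of_real (q\<^sup>2)" and "A \<equiv> qpow q (2 * a)" and "B \<equiv> qpow q (2 * (1/2 - b))"
    and "w \<equiv> qpow q (2 * (c - 1/2))" and "y \<equiv> qpow q (2 * (d - 1/2))"
  assumes q: "0 < q" "q < 1" and re: "0 < Re (a + b + c + d - 1/2)"
    and defined: "qgamma2_defined q a" "qgamma2_defined q (1/2 + a + b)"
      "qgamma2_defined q (1/2 + a + c)" "qgamma2_defined q (1/2 + a + d)"
  shows "vwp_term P A B w y sums
    (qpoch_inf (A*P) P * qpoch_inf (A*P/B*w) P * qpoch_inf (A*P/B*y) P * qpoch_inf (A*P*w*y) P /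
     (qpoch_inf (A*P/B) P * qpoch_inf (A*P*w) P * qpoch_inf (A*P*y) P * qpoch_inf (A*P/B*w*y) P))"
proof -
  have roots: "qpow q (2 * x) * P ^ j \<noteq> 1" if "qgamma2_defined q x" for x j
    using that qgamma2_defined_iff[OF q] unfolding P_def by blast
  have ids: "A*P/B = qpow q (2 * (1/2 + a + b))" "A*P*w = qpow q (2 * (1/2 + a + c))"
      "A*P*y = qpow q (2 * (1/2 + a + d))" "A*P/B*w*y = qpow q (2 * (a + b + c + d - 1/2))"
    unfolding P_def A_def B_def w_def y_def by (fact qpow_parameter_identities[OF q(1)])+
  interpret rogers_6phi5 P A B
  proof
    show "norm P < 1" using q unfolding P_def norm_of_real by (simp add: abs_square_less_1)
    show "B \<noteq> 0" unfolding B_def by (rule qpow_nonzero)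
    show "A * P ^ j \<noteq> 1" for j unfolding A_def by (rule roots[OF defined(1)])
    show "(A * P / B) * P ^ j \<noteq> 1" for j unfolding ids(1) by (rule roots[OF defined(2)])
  qed
  show ?thesis
  proof (rule rogers_6phi5_sums)
    show "A*P*w*P^j \<noteq> 1" "A*P*y*P^j \<noteq> 1" for j
      unfolding ids(2,3) using roots[OF defined(3)] roots[OF defined(4)] by auto
    show "norm (A*P/B*w*y) < 1"
      unfolding ids(4) using q re by (intro norm_qpow_less_1) auto
  qed
qed

theorem theorem4p1:
  fixes q :: real and a b c d :: complex
  assumes q0: "0 < q" and q1: "q < 1"
    and re: "Re (a + b + c + d - 1/2) > 0"
    and lhs_def: "\<forall>n::nat.
        qgamma2_defined q 1 \<and> qgamma2_defined q (a + of_nat n) \<and>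
        qgamma2_defined q (1/2) \<and>
        qgamma2_defined q (1/2 + of_nat n - b) \<and>
        qgamma2_defined q (1/2 + of_nat n - c) \<and>
        qgamma2_defined q (1/2 + of_nat n - d) \<and>
        qgamma2_defined q (1/2 + a + b + of_nat n) \<and>
        qgamma2_defined q (1/2 + a + c + of_nat n) \<and>
        qgamma2_defined q (1/2 + a + d + of_nat n)"
    and rhs_def:
        "qgamma2_defined q (1/2 - b)" "qgamma2_defined q (1/2 - c)"
        "qgamma2_defined q (1/2 - d)" "qgamma2_defined q (a + b + c + d - 1/2)"
        "qgamma2_defined q (a + b + c)" "qgamma2_defined q (a + b + d)"
        "qgamma2_defined q (a + c + d)"
  shows "(\<lambda>n::nat.
      (1 - qpow q (4 * of_nat n + 2 * a)) * qpochg2 q 1 (a + of_nat n - 1)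
        * qpochg2 q (1/2) (of_nat n - b) * qpochg2 q (1/2) (of_nat n - c)
        * qpochg2 q (1/2) (of_nat n - d)
      / (complex_of_real (1 - q\<^sup>2) * qfact2 q n
        * qpochg2 q (1/2) (a + b + of_nat n) * qpochg2 q (1/2) (a + c + of_nat n)
        * qpochg2 q (1/2) (a + d + of_nat n))
      * qpow q (2 * (a + b + c + d) * of_nat n - of_nat n))
    sums
      ((pi_q q)\<^sup>2 * qpochg2 q (1/2) (- b) * qpochg2 q (1/2) (- c)
        * qpochg2 q (1/2) (- d) * qpochg2 q (1/2) (a + b + c + d - 1)
      / (qpochg2 q 1 (a + b + c - 1) * qpochg2 q 1 (a + b + d - 1)
        * qpochg2 q 1 (a + c + d - 1) * qpow q (1/2)))"
proof -
  have defined: "qgamma2_defined q 1" "qgamma2_defined q (1/2)" "qgamma2_defined q a"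
      "qgamma2_defined q (1/2 - b)" "qgamma2_defined q (1/2 - c)" "qgamma2_defined q (1/2 - d)"
      "qgamma2_defined q (1/2 + a + b)" "qgamma2_defined q (1/2 + a + c)" "qgamma2_defined q (1/2 + a + d)"
    using lhs_def[rule_format, of 0] by simp_all
  let ?K = "(1 - qpow q (2 * a)) * qpochg2 q 1 (a - 1) * qpochg2 q (1/2) (- b) * qpochg2 q (1/2) (- c)
        * qpochg2 q (1/2) (- d) / (complex_of_real (1 - q\<^sup>2) * qpochg2 q (1/2) (a + b)
        * qpochg2 q (1/2) (a + c) * qpochg2 q (1/2) (a + d))"
  from sums_mult[OF vwp_term_qpow_sums[OF q0 q1 re defined(3,7-9)], of ?K] show ?thesis
    unfolding rogers_product_eq_qgamma2[OF q0 q1 defined rhs_def(4-7)]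
      qgamma2_summand_eq_vwp_term[OF q0 q1 defined, symmetric] .
qed

end
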